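(* Let $q\in(0,1]$. Consider the policy that directly follows the ex ante solution: whenever a task of type $s$ arrives at time $t$, it notifies each volunteer $v$ independently with probability $x^*_{v,s,t}$. On instances of the online volunteer notification problem whose inter-activity time distribution has minimum discrete hazard rate $q$, this policy achieves a competitive ratio of at most $q$; that is, for every $c>q$ there is such an instance $\mathcal{I}$ on which the policy's expected number of completed tasks is less than $c\,\mathbf{LP}_{\mathcal{I}}$.
   Context: Online volunteer notification problem. An instance $\mathcal{I}$ consists of volunteers $[V]$, task types $[S]$, horizon $T$, arrival probabilities $\lambda_{s,t}\ge0$ with $\sum_s\lambda_{s,t}\le1$, match probabilities $p_{v,s}\in[0,1]$, and a probability mass function $g$ on the positive integers with CDF $G(\tau)=\sum_{i\le\tau}g(i)$, $G(0)=0$. In each period $t$ at most one task arrives, of type $s$ with probability $\lambda_{s,t}$, independently across periods. All volunteers start active. Upon an arrival the platform notifies a subset of volunteers; each notified active volunteer $v$ responds positively independently with probability $p_{v,s}$; the task is completed iff at least one does. A volunteer active and notified at time $t$ becomes inactive (regardless of response) and active again at $t+Z$, $Z\sim g$ independent; inactive volunteers ignore notifications and are unaffected by them. MDHR: $q=\min_{\tau\in\mathbb{N}}\frac{g(\tau)}{1-G(\tau-1)}$ (with $\frac00:=1$). $\mathcal{P}$: set of $\mathbf{x}$ with $0\le x_{v,s,t}\le1$ and $\sum_{\tau=1}^t\sum_s\lambda_{s,\tau}x_{v,s,\tau}(1-G(t-\tau))\le1$ for all $v,t$; $\mathbf{LP}_{\mathcal{I}}=\max_{\mathbf{x}\in\mathcal{P}}\sum_{t,s}\lambda_{s,t}\min\{\sum_vx_{v,s,t}p_{v,s},1\}$.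 Ex ante solution: $f(\mathbf{x})=\sum_{t,s}\lambda_{s,t}(1-\prod_v(1-x_{v,s,t}p_{v,s}))$; $\mathbf{x}^*_{LP}$ optimal for $\mathbf{LP}_{\mathcal{I}}$; $\mathbf{x}^*_{AA}$ output of: $\mathbf{x}^0=\mathbf{0}$, for $i=1..m$ ($m\in\mathbb{N}$) $\mathbf{y}^i\in\arg\max_{\mathbf{x}\in\mathcal{P}}\langle\mathbf{x},\nabla f(\mathbf{x}^{i-1})\rangle$, $\mathbf{x}^i=\mathbf{x}^{i-1}+\mathbf{y}^i/m$, output $\mathbf{x}^m$; $\mathbf{x}^*_{SQ}$ built for $v=1..V$ in order, $(x^{SQ}_{v,s,t})_{s,t}$ optimal for $\max\sum_{t,s}\lambda_{s,t}\prod_{u<v}(1-p_{u,s}x^{SQ}_{u,s,t})p_{v,s}x_{v,s,t}$ s.t. $0\le x_{v,s,t}\le1$ and $\sum_{\tau\le t}\sum_s\lambda_{s,\tau}x_{v,s,\tau}(1-G(t-\tau))\le1$ for all $t$; $\mathbf{x}^*\in\arg\max_{\mathbf{x}\in\{\mathbf{x}^*_{LP},\mathbf{x}^*_{AA},\mathbf{x}^*_{SQ}\}}f(\mathbf{x})$. *)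

theory Defs
  imports "HOL-Probability.Probability" "HOL-Probability.Product_PMF"
begin

text \<open>Volunteers are 0..<V, task types 0..<S, periods 1..T.
  lam s t = arrival probability of type s at period t;
  p v s = match probability; g = inter-activity pmf on the positive integers
  (pmf g 0 = 0).\<close>

definition valid_instance ::
  "nat \<Rightarrow> nat \<Rightarrow> nat \<Rightarrow> (nat \<Rightarrow> nat \<Rightarrow> real) \<Rightarrow> (nat \<Rightarrow> nat \<Rightarrow> real) \<Rightarrow> nat pmf \<Rightarrow> bool" where
  "valid_instance V S T lam p g \<longleftrightarrow>
     (\<forall>s<S. \<forall>t\<in>{1..T}. 0 \<le> lam s t) \<and>
     (\<forall>t\<in>{1..T}. (\<Sum>s<S. lam s t) \<le> 1) \<and>
     (\<forall>v<V. \<forall>s<S. 0 \<le> p v s \<and> p v s \<le> 1) \<and>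
     pmf g 0 = 0"

definition cdfG :: "nat pmf \<Rightarrow> nat \<Rightarrow> real" where
  "cdfG g \<tau> = (\<Sum>i\<le>\<tau>. pmf g i)"

definition hazard :: "nat pmf \<Rightarrow> nat \<Rightarrow> real" where
  "hazard g \<tau> = (if 1 - cdfG g (\<tau> - 1) = 0 \<and> pmf g \<tau> = 0 then 1
                  else pmf g \<tau> / (1 - cdfG g (\<tau> - 1)))"

definition has_mdhr :: "nat pmf \<Rightarrow> real \<Rightarrow> bool" where
  "has_mdhr g q \<longleftrightarrow> (\<exists>\<tau>\<ge>1. hazard g \<tau> = q) \<and> (\<forall>\<tau>\<ge>1. q \<le> hazard g \<tau>)"

definition in_P ::
  "nat \<Rightarrow> nat \<Rightarrow> nat \<Rightarrow> (nat \<Rightarrow> nat \<Rightarrow> real) \<Rightarrow> nat pmf \<Rightarrow> (nat \<Rightarrow> nat \<Rightarrow> nat \<Rightarrow> real) \<Rightarrow> bool" where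
  "in_P V S T lam g x \<longleftrightarrow>
     (\<forall>v<V. \<forall>s<S. \<forall>t\<in>{1..T}. 0 \<le> x v s t \<and> x v s t \<le> 1) \<and>
     (\<forall>v<V. \<forall>t\<in>{1..T}.
        (\<Sum>\<tau>\<in>{1..t}. \<Sum>s<S. lam s \<tau> * x v s \<tau> * (1 - cdfG g (t - \<tau>))) \<le> 1)"

definition LP_obj ::
  "nat \<Rightarrow> nat \<Rightarrow> nat \<Rightarrow> (nat \<Rightarrow> nat \<Rightarrow> real) \<Rightarrow> (nat \<Rightarrow> nat \<Rightarrow> real) \<Rightarrow> (nat \<Rightarrow> nat \<Rightarrow> nat \<Rightarrow> real) \<Rightarrow> real" where
  "LP_obj V S T lam p x = (\<Sum>t\<in>{1..T}. \<Sum>s<S. lam s t * min (\<Sum>v<V. x v s t * p v s) 1)"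

text \<open>LP_I = max over P of the LP objective (the max exists; we write it as a Sup).\<close>
definition LP_value ::
  "nat \<Rightarrow> nat \<Rightarrow> nat \<Rightarrow> (nat \<Rightarrow> nat \<Rightarrow> real) \<Rightarrow> (nat \<Rightarrow> nat \<Rightarrow> real) \<Rightarrow> nat pmf \<Rightarrow> real" where
  "LP_value V S T lam p g = Sup (LP_obj V S T lam p ` {x. in_P V S T lam g x})"

definition is_LP_opt ::
  "nat \<Rightarrow> nat \<Rightarrow> nat \<Rightarrow> (nat \<Rightarrow> nat \<Rightarrow> real) \<Rightarrow> (nat \<Rightarrow> nat \<Rightarrow> real) \<Rightarrow> nat pmf \<Rightarrow> (nat \<Rightarrow> nat \<Rightarrow> nat \<Rightarrow> real) \<Rightarrow> bool" where
  "is_LP_opt V S T lam p g x \<longleftrightarrow> in_P V S T lam g x \<and>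
     (\<forall>y. in_P V S T lam g y \<longrightarrow> LP_obj V S T lam p y \<le> LP_obj V S T lam p x)"

definition f_obj ::
  "nat \<Rightarrow> nat \<Rightarrow> nat \<Rightarrow> (nat \<Rightarrow> nat \<Rightarrow> real) \<Rightarrow> (nat \<Rightarrow> nat \<Rightarrow> real) \<Rightarrow> (nat \<Rightarrow> nat \<Rightarrow> nat \<Rightarrow> real) \<Rightarrow> real" where
  "f_obj V S T lam p x = (\<Sum>t\<in>{1..T}. \<Sum>s<S. lam s t * (1 - (\<Prod>v<V. 1 - x v s t * p v s)))"

text \<open>Gradient of f: partial derivative w.r.t. x_{v,s,t}.\<close>
definition grad_f ::
  "nat \<Rightarrow> (nat \<Rightarrow> nat \<Rightarrow> real) \<Rightarrow> (nat \<Rightarrow> nat \<Rightarrow> real) \<Rightarrow> (nat \<Rightarrow> nat \<Rightarrow> nat \<Rightarrow> real) \<Rightarrow> nat \<Rightarrow> nat \<Rightarrow> nat \<Rightarrow> real" where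
  "grad_f V lam p x v s t = lam s t * p v s * (\<Prod>u\<in>{..<V} - {v}. 1 - x u s t * p u s)"

definition inner_sol ::
  "nat \<Rightarrow> nat \<Rightarrow> nat \<Rightarrow> (nat \<Rightarrow> nat \<Rightarrow> nat \<Rightarrow> real) \<Rightarrow> (nat \<Rightarrow> nat \<Rightarrow> nat \<Rightarrow> real) \<Rightarrow> real" where
  "inner_sol V S T a b = (\<Sum>v<V. \<Sum>s<S. \<Sum>t\<in>{1..T}. a v s t * b v s t)"

text \<open>x is a possible output of the continuous-greedy procedure (for some m \<ge> 1
  and some choice of the argmax points).\<close>
definition is_AA_output ::
  "nat \<Rightarrow> nat \<Rightarrow> nat \<Rightarrow> (nat \<Rightarrow> nat \<Rightarrow> real) \<Rightarrow> (nat \<Rightarrow> nat \<Rightarrow> real) \<Rightarrow> nat pmf \<Rightarrow> (nat \<Rightarrow> nat \<Rightarrow> nat \<Rightarrow> real) \<Rightarrow> bool" where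
  "is_AA_output V S T lam p g x \<longleftrightarrow>
     (\<exists>m::nat. m \<ge> 1 \<and>
       (\<exists>xs ys :: nat \<Rightarrow> nat \<Rightarrow> nat \<Rightarrow> nat \<Rightarrow> real.
          xs 0 = (\<lambda>v s t. 0) \<and>
          (\<forall>i\<in>{1..m}.
             in_P V S T lam g (ys i) \<and>
             (\<forall>y. in_P V S T lam g y \<longrightarrow>
                inner_sol V S T y (grad_f V lam p (xs (i - 1)))
                  \<le> inner_sol V S T (ys i) (grad_f V lam p (xs (i - 1)))) \<and>
             xs i = (\<lambda>v s t. xs (i - 1) v s t + ys i v s t / real m)) \<and>
          x = xs m))"

definition single_feasible ::
  "nat \<Rightarrow> nat \<Rightarrow> (nat \<Rightarrow> nat \<Rightarrow> real) \<Rightarrow> nat pmf \<Rightarrow> (nat \<Rightarrow> nat \<Rightarrow> real) \<Rightarrow> bool" where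
  "single_feasible S T lam g y \<longleftrightarrow>
     (\<forall>s<S. \<forall>t\<in>{1..T}. 0 \<le> y s t \<and> y s t \<le> 1) \<and>
     (\<forall>t\<in>{1..T}. (\<Sum>\<tau>\<in>{1..t}. \<Sum>s<S. lam s \<tau> * y s \<tau> * (1 - cdfG g (t - \<tau>))) \<le> 1)"

definition SQ_obj ::
  "nat \<Rightarrow> nat \<Rightarrow> (nat \<Rightarrow> nat \<Rightarrow> real) \<Rightarrow> (nat \<Rightarrow> nat \<Rightarrow> real) \<Rightarrow> (nat \<Rightarrow> nat \<Rightarrow> nat \<Rightarrow> real) \<Rightarrow> nat \<Rightarrow> (nat \<Rightarrow> nat \<Rightarrow> real) \<Rightarrow> real" where
  "SQ_obj S T lam p x v y =
     (\<Sum>t\<in>{1..T}. \<Sum>s<S. lam s t * (\<Prod>u<v. 1 - p u s * x u s t) * p v s * y s t)"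

text \<open>x is a possible output of the sequential procedure: each row x v is optimal
  for its problem given the rows x u, u < v.\<close>
definition is_SQ_output ::
  "nat \<Rightarrow> nat \<Rightarrow> nat \<Rightarrow> (nat \<Rightarrow> nat \<Rightarrow> real) \<Rightarrow> (nat \<Rightarrow> nat \<Rightarrow> real) \<Rightarrow> nat pmf \<Rightarrow> (nat \<Rightarrow> nat \<Rightarrow> nat \<Rightarrow> real) \<Rightarrow> bool" where
  "is_SQ_output V S T lam p g x \<longleftrightarrow>
     (\<forall>v<V. single_feasible S T lam g (x v) \<and>
        (\<forall>y. single_feasible S T lam g y \<longrightarrow> SQ_obj S T lam p x v y \<le> SQ_obj S T lam p x v (x v)))"

text \<open>x is an ex ante solution x*: the f-best among some x_LP, x_AA, x_SQ.\<close>
definition is_ex_ante ::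
  "nat \<Rightarrow> nat \<Rightarrow> nat \<Rightarrow> (nat \<Rightarrow> nat \<Rightarrow> real) \<Rightarrow> (nat \<Rightarrow> nat \<Rightarrow> real) \<Rightarrow> nat pmf \<Rightarrow> (nat \<Rightarrow> nat \<Rightarrow> nat \<Rightarrow> real) \<Rightarrow> bool" where
  "is_ex_ante V S T lam p g x \<longleftrightarrow>
     (\<exists>a b c. is_LP_opt V S T lam p g a \<and> is_AA_output V S T lam p g b \<and> is_SQ_output V S T lam p g c \<and>
        x \<in> {a, b, c} \<and>
        f_obj V S T lam p a \<le> f_obj V S T lam p x \<and>
        f_obj V S T lam p b \<le> f_obj V S T lam p x \<and>
        f_obj V S T lam p c \<le> f_obj V S T lam p x)"

text \<open>Stochastic model. A state r : volunteer \<Rightarrow> nat gives the period from which the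
  volunteer is active: v is active in period t iff r v \<le> t. Initially r = 0.\<close>

definition arrival_pmf :: "nat \<Rightarrow> (nat \<Rightarrow> nat \<Rightarrow> real) \<Rightarrow> nat \<Rightarrow> nat option pmf" where
  "arrival_pmf S lam t = embed_pmf (\<lambda>a. case a of
       None \<Rightarrow> 1 - (\<Sum>s<S. lam s t)
     | Some s \<Rightarrow> (if s < S then lam s t else 0))"

text \<open>One period t under the policy that notifies v independently with probability
  x v s t. Result: (task completed?, new state).\<close>
definition step_pmf ::
  "nat \<Rightarrow> nat \<Rightarrow> (nat \<Rightarrow> nat \<Rightarrow> real) \<Rightarrow> (nat \<Rightarrow> nat \<Rightarrow> real) \<Rightarrow> nat pmf \<Rightarrow> (nat \<Rightarrow> nat \<Rightarrow> nat \<Rightarrow> real)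
     \<Rightarrow> nat \<Rightarrow> (nat \<Rightarrow> nat) \<Rightarrow> (bool \<times> (nat \<Rightarrow> nat)) pmf" where
  "step_pmf V S lam p g x t r =
     bind_pmf (arrival_pmf S lam t) (\<lambda>a. case a of
       None \<Rightarrow> return_pmf (False, r)
     | Some s \<Rightarrow>
         bind_pmf (Pi_pmf {..<V} (False, False, 0)
                     (\<lambda>v. pair_pmf (bernoulli_pmf (x v s t)) (pair_pmf (bernoulli_pmf (p v s)) g)))
           (\<lambda>d. let A = {v. v < V \<and> fst (d v) \<and> r v \<le> t} in
                 return_pmf ((\<exists>v\<in>A. fst (snd (d v))),
                             (\<lambda>v. if v \<in> A then t + snd (snd (d v)) else r v))))"

primrec state_dist ::
  "nat \<Rightarrow> nat \<Rightarrow> (nat \<Rightarrow> nat \<Rightarrow> real) \<Rightarrow> (nat \<Rightarrow> nat \<Rightarrow> real) \<Rightarrow> nat pmf \<Rightarrow> (nat \<Rightarrow> nat \<Rightarrow> nat \<Rightarrow> real)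
     \<Rightarrow> nat \<Rightarrow> (nat \<Rightarrow> nat) pmf" where
  "state_dist V S lam p g x 0 = return_pmf (\<lambda>v. 0)"
| "state_dist V S lam p g x (Suc n) =
     bind_pmf (state_dist V S lam p g x n) (\<lambda>r. map_pmf snd (step_pmf V S lam p g x (Suc n) r))"

definition policy_reward ::
  "nat \<Rightarrow> nat \<Rightarrow> nat \<Rightarrow> (nat \<Rightarrow> nat \<Rightarrow> real) \<Rightarrow> (nat \<Rightarrow> nat \<Rightarrow> real) \<Rightarrow> nat pmf \<Rightarrow> (nat \<Rightarrow> nat \<Rightarrow> nat \<Rightarrow> real) \<Rightarrow> real" where
  "policy_reward V S T lam p g x =
     (\<Sum>t\<in>{1..T}. measure_pmf.prob
        (bind_pmf (state_dist V S lam p g x (t - 1)) (step_pmf V S lam p g x t)) {c. fst c})"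

end

theory Submission
  imports Defs
begin

(*
  One volunteer and two periods. In period 1 a task of type 0 arrives surely and is accepted
  with probability d; in period 2 a task of type 1 arrives with probability q and is accepted
  surely. The inter-activity time is 1 with probability q and 2 otherwise, whose minimum
  hazard rate is q. The capacity constraints of P never bind, so every ex ante solution
  (LP, continuous greedy or sequential) notifies on both tasks and LP = d + q. Following it, the
  volunteer is notified in period 1 and is active again in period 2 only with probability q,
  so the policy completes d + q^2 tasks in expectation, while (d + q^2) / (d + q) < c for small d.
*)

lemma pmf_arrival_pmf:
  assumes "\<And>s. s < S \<Longrightarrow> 0 \<le> lam s t" and "(\<Sum>s<S. lam s t) \<le> 1"
  shows "pmf (arrival_pmf S lam t) a =
           (case a of None \<Rightarrow> 1 - (\<Sum>s<S. lam s t) | Some s \<Rightarrow> if s < S then lam s t else 0)"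
  unfolding arrival_pmf_def
proof (rule pmf_embed_pmf)
  let ?f = "\<lambda>a. case a of None \<Rightarrow> 1 - (\<Sum>s<S. lam s t) | Some s \<Rightarrow> if s < S then lam s t else 0"
  show "0 \<le> ?f a" for a
    using assms by (auto split: option.splits)
  have "(\<integral>\<^sup>+a. ennreal (?f a) \<partial>count_space UNIV) = (\<Sum>a\<in>insert None (Some ` {..<S}). ennreal (?f a))"
    by (rule nn_integral_count_space') (auto split: option.splits)
  also have "\<dots> = ennreal (\<Sum>a\<in>insert None (Some ` {..<S}). ?f a)"
    using assms by (intro sum_ennreal) (auto split: option.splits)
  also have "(\<Sum>a\<in>insert None (Some ` {..<S}). ?f a) = 1"
    by (subst sum.insert) (auto simp: sum.reindex)
  finally show "(\<integral>\<^sup>+a. ennreal (?f a) \<partial>count_space UNIV) = 1"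
    by simp
qed

lemma measure_pmf_prob_bind:
  fixes M :: "'a pmf" and f :: "'a \<Rightarrow> 'b pmf"
  shows "measure_pmf.prob (bind_pmf M f) A = (\<integral>x. measure_pmf.prob (f x) A \<partial>measure_pmf M)"
proof -
  have "measure_pmf.prob N A = pmf (map_pmf (\<lambda>y. y \<in> A) N) True" for N :: "'b pmf"
    by (simp add: pmf_map vimage_def)
  then show ?thesis
    by (simp add: map_bind_pmf pmf_bind)
qed

lemma bernoulli_pmf_1: "bernoulli_pmf 1 = return_pmf True"
  by (rule pmf_eqI) (simp add: indicator_def)

lemma in_P_iff_single_feasible:
  "in_P V S T lam g x \<longleftrightarrow> (\<forall>v<V. single_feasible S T lam g (x v))"
  unfolding in_P_def single_feasible_def by blast

lemma step_pmf_single_volunteer: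
  "step_pmf (Suc 0) S lam p g x t r =
     bind_pmf (arrival_pmf S lam t) (\<lambda>a. case a of
       None \<Rightarrow> return_pmf (False, r)
     | Some s \<Rightarrow> map_pmf (\<lambda>(n, b, z). (n \<and> r 0 \<le> t \<and> b, if n \<and> r 0 \<le> t then r(0 := t + z) else r))
          (pair_pmf (bernoulli_pmf (x 0 s t)) (pair_pmf (bernoulli_pmf (p 0 s)) g)))"
proof -
  let ?F = "\<lambda>(n, b, z). (n \<and> r 0 \<le> t \<and> b, if n \<and> r 0 \<le> t then r(0 := t + z) else r)"
  have "bind_pmf P (\<lambda>d. let A = {v. v < Suc 0 \<and> fst (d v) \<and> r v \<le> t} in
          return_pmf ((\<exists>v\<in>A. fst (snd (d v))), (\<lambda>v. if v \<in> A then t + snd (snd (d v)) else r v)))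
        = map_pmf ?F (map_pmf (\<lambda>d. d 0) P)" for P :: "(nat \<Rightarrow> bool \<times> bool \<times> nat) pmf"
  proof -
    have "(let A = {v. v < Suc 0 \<and> fst (d v) \<and> r v \<le> t} in
           return_pmf ((\<exists>v\<in>A. fst (snd (d v))), (\<lambda>v. if v \<in> A then t + snd (snd (d v)) else r v)))
          = return_pmf (?F (d 0))" for d :: "nat \<Rightarrow> bool \<times> bool \<times> nat"
    proof -
      obtain n b z where d0: "d 0 = (n, b, z)"
        by (metis prod.exhaust)
      have "{v. v < Suc 0 \<and> fst (d v) \<and> r v \<le> t} = (if n \<and> r 0 \<le> t then {0} else {})"
        using d0 by auto
      then show ?thesis
        using d0 by (auto simp: Let_def fun_eq_iff)
    qed
    then show ?thesis
      by (simp add: map_pmf_def bind_assoc_pmf bind_return_pmf)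
  qed
  then show ?thesis
    unfolding step_pmf_def
    by (intro bind_pmf_cong refl) (auto simp: Pi_pmf_component split: option.split)
qed

lemma prob_completion_single_volunteer:
  assumes "\<And>s. s < S \<Longrightarrow> 0 \<le> lam s t" and "(\<Sum>s<S. lam s t) \<le> 1"
  shows "measure_pmf.prob (step_pmf (Suc 0) S lam p g x t r) {c. fst c} =
           (if r 0 \<le> t
            then \<Sum>s<S. lam s t * pmf (bernoulli_pmf (x 0 s t)) True
                             * pmf (bernoulli_pmf (p 0 s)) True
            else 0)"
proof -
  let ?notified = "\<lambda>s. pair_pmf (bernoulli_pmf (x 0 s t)) (pair_pmf (bernoulli_pmf (p 0 s)) g)"
  let ?success = "\<lambda>s. if r 0 \<le> t
    then pmf (bernoulli_pmf (x 0 s t)) True * pmf (bernoulli_pmf (p 0 s)) True else 0"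
  let ?h = "\<lambda>a. case a of None \<Rightarrow> 0 | Some s \<Rightarrow> ?success s"
  have success: "measure_pmf.prob (?notified s) {(n, b, z). n \<and> r 0 \<le> t \<and> b} = ?success s" for s
  proof (cases "r 0 \<le> t")
    case True
    then have "{(n, b, z). n \<and> r 0 \<le> t \<and> b} = {True} \<times> ({True} \<times> (UNIV :: nat set))"
      by auto
    then show ?thesis
      using True by (simp add: measure_pmf_prob_product measure_pmf_single)
  qed (simp add: case_prod_unfold)
  have "measure_pmf.prob (step_pmf (Suc 0) S lam p g x t r) {c. fst c}
          = (\<integral>a. ?h a \<partial>measure_pmf (arrival_pmf S lam t))"
    unfolding step_pmf_single_volunteer measure_pmf_prob_bind
    by (intro Bochner_Integration.integral_cong refl)
      (auto simp: success[symmetric] vimage_def case_prod_unfold split: option.split)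
  also have "\<dots> = (\<Sum>a\<in>Some ` {..<S}. ?h a * pmf (arrival_pmf S lam t) a)"
    by (rule integral_measure_pmf_real)
      (auto simp: set_pmf_iff pmf_arrival_pmf[of S lam t, OF assms] split: option.splits if_splits)
  also have "\<dots> = (\<Sum>s<S. ?success s * lam s t)"
    by (simp add: sum.reindex pmf_arrival_pmf[of S lam t, OF assms])
  finally show ?thesis
    by (auto simp: sum_distrib_left mult_ac)
qed

lemma le_weighted_sum_imp_eq_one:
  fixes a b u w :: real
  assumes "0 < u" "0 < w" "a \<le> 1" "b \<le> 1" "u + w \<le> u * a + w * b"
  shows "a = 1" "b = 1"
proof -
  have "0 \<le> u * (1 - a)" "0 \<le> w * (1 - b)" "u * (1 - a) + w * (1 - b) \<le> 0"
    using assms by (auto simp: algebra_simps)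
  then have "u * (1 - a) = 0" "w * (1 - b) = 0"
    by linarith+
  then show "a = 1" "b = 1"
    using assms by auto
qed

definition one_or_two_pmf :: "real \<Rightarrow> nat pmf" where
  "one_or_two_pmf q = map_pmf (\<lambda>b. if b then 1 else 2) (bernoulli_pmf q)"

lemma pmf_one_or_two_pmf:
  assumes "0 \<le> q" "q \<le> 1"
  shows "pmf (one_or_two_pmf q) k = (if k = 1 then q else if k = 2 then 1 - q else 0)"
proof -
  have "(\<lambda>b. if b then 1 else 2::nat) -` {k} =
          (if k = 1 then {True} else if k = 2 then {False} else {})"
    by (cases "k = 1"; cases "k = 2") (auto simp: vimage_def split: if_split_asm)
  then show ?thesis
    using assms by (simp add: one_or_two_pmf_def pmf_map measure_pmf_single)
qed

lemma cdfG_one_or_two_pmf: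
  assumes "0 \<le> q" "q \<le> 1"
  shows "cdfG (one_or_two_pmf q) k = (if k = 0 then 0 else if k = 1 then q else 1)"
  by (induction k) (use assms in \<open>auto simp: cdfG_def pmf_one_or_two_pmf\<close>)

lemma hazard_one_or_two_pmf:
  assumes "0 \<le> q" "q \<le> 1" "1 \<le> k"
  shows "hazard (one_or_two_pmf q) k = (if k = 1 then q else 1)"
  using assms by (auto simp: hazard_def cdfG_one_or_two_pmf pmf_one_or_two_pmf)

lemma has_mdhr_one_or_two_pmf:
  assumes "0 \<le> q" "q \<le> 1"
  shows "has_mdhr (one_or_two_pmf q) q"
  using assms by (auto simp: has_mdhr_def hazard_one_or_two_pmf intro: exI[of _ 1])

definition hard_arrivals :: "real \<Rightarrow> nat \<Rightarrow> nat \<Rightarrow> real" where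
  "hard_arrivals q s t = (if s = 0 \<and> t = 1 then 1 else if s = 1 \<and> t = 2 then q else 0)"

definition hard_match :: "real \<Rightarrow> nat \<Rightarrow> nat \<Rightarrow> real" where
  "hard_match d v s = (if s = 0 then d else 1)"

locale hard_instance =
  fixes q d :: real
  assumes q_pos: "0 < q" and q_le_1: "q \<le> 1" and d_pos: "0 < d" and d_le_1: "d \<le> 1"
begin

abbreviation "lam \<equiv> hard_arrivals q"
abbreviation "p \<equiv> hard_match d"
abbreviation "g \<equiv> one_or_two_pmf q"

lemma valid: "valid_instance (Suc 0) 2 2 lam p g"
  using q_pos q_le_1 d_pos d_le_1
  by (auto simp: valid_instance_def hard_arrivals_def hard_match_def pmf_one_or_two_pmf
      numeral_2_eq_2 less_Suc_eq le_Suc_eq)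

lemma load_period_1:
  "(\<Sum>\<tau>\<in>{1..1}. \<Sum>s<2. lam s \<tau> * y s \<tau> * (1 - cdfG g (1 - \<tau>))) = y 0 1"
  using q_pos q_le_1 by (simp add: hard_arrivals_def cdfG_one_or_two_pmf numeral_2_eq_2)

lemma load_period_2:
  "(\<Sum>\<tau>\<in>{1..2}. \<Sum>s<2. lam s \<tau> * y s \<tau> * (1 - cdfG g (2 - \<tau>))) = y 0 1 * (1 - q) + q * y 1 2"
  using q_pos q_le_1 by (simp add: hard_arrivals_def cdfG_one_or_two_pmf numeral_2_eq_2)

lemma single_feasible_iff:
  "single_feasible 2 2 lam g y \<longleftrightarrow> (\<forall>s<2. \<forall>t\<in>{1..2}. 0 \<le> y s t \<and> y s t \<le> 1)"
proof
  assume box: "\<forall>s<2. \<forall>t\<in>{1..2}. 0 \<le> y s t \<and> y s t \<le> 1"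
  then have "y 0 1 * (1 - q) + q * y 1 2 \<le> 1 * (1 - q) + q * 1"
    using q_pos q_le_1 by (intro add_mono mult_mono) auto
  then have "(\<Sum>\<tau>\<in>{1..t}. \<Sum>s<2. lam s \<tau> * y s \<tau> * (1 - cdfG g (t - \<tau>))) \<le> 1" if "t \<in> {1..2}" for t
    using that box load_period_1 load_period_2
    by (cases "t = 1") (auto simp: le_Suc_eq numeral_2_eq_2)
  with box show "single_feasible 2 2 lam g y"
    unfolding single_feasible_def by blast
qed (simp add: single_feasible_def)

lemma in_P_iff: "in_P (Suc 0) 2 2 lam g x \<longleftrightarrow> single_feasible 2 2 lam g (x 0)"
  by (simp add: in_P_iff_single_feasible)

lemma single_feasible_bounds:
  assumes "single_feasible 2 2 lam g y"
  shows "0 \<le> y 0 1" "y 0 1 \<le> 1" "0 \<le> y 1 2" "y 1 2 \<le> 1"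
  using assms by (auto simp: single_feasible_iff)

lemma ones_feasible: "single_feasible 2 2 lam g (\<lambda>s t. 1)"
  by (simp add: single_feasible_iff)

lemma ones_in_P: "in_P (Suc 0) 2 2 lam g (\<lambda>v s t. 1)"
  by (simp add: in_P_iff ones_feasible)

lemma LP_obj_eq: "LP_obj (Suc 0) 2 2 lam p x = min (x 0 0 1 * d) 1 + q * min (x 0 1 2) 1"
  by (simp add: LP_obj_def hard_arrivals_def hard_match_def numeral_2_eq_2)

lemma SQ_obj_eq: "SQ_obj 2 2 lam p x 0 y = d * y 0 1 + q * y 1 2"
  by (simp add: SQ_obj_def hard_arrivals_def hard_match_def numeral_2_eq_2)

lemma inner_grad_f_eq:
  "inner_sol (Suc 0) 2 2 y (grad_f (Suc 0) lam p x) = d * y 0 0 1 + q * y 0 1 2"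
  by (simp add: inner_sol_def grad_f_def hard_arrivals_def hard_match_def numeral_2_eq_2
      lessThan_Suc)

lemma LP_obj_le:
  assumes "in_P (Suc 0) 2 2 lam g x"
  shows "LP_obj (Suc 0) 2 2 lam p x \<le> d + q"
proof -
  have "x 0 0 1 * d \<le> 1 * d" "q * min (x 0 1 2) 1 \<le> q * 1"
    using single_feasible_bounds[of "x 0"] assms d_pos q_pos
    by (auto simp: in_P_iff intro: mult_right_mono)
  then show ?thesis
    unfolding LP_obj_eq by linarith
qed

lemma LP_value_eq: "LP_value (Suc 0) 2 2 lam p g = d + q"
  unfolding LP_value_def
proof (rule cSup_eq_maximum)
  show "d + q \<in> LP_obj (Suc 0) 2 2 lam p ` {x. in_P (Suc 0) 2 2 lam g x}"
    using d_le_1 ones_in_P by (intro image_eqI[of _ _ "\<lambda>v s t. 1"]) (auto simp: LP_obj_eq)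
qed (auto intro: LP_obj_le)

lemma LP_opt_notifies_always:
  assumes "is_LP_opt (Suc 0) 2 2 lam p g x"
  shows "x 0 0 1 = 1 \<and> x 0 1 2 = 1"
proof -
  have feasible: "single_feasible 2 2 lam g (x 0)"
    using assms by (simp add: is_LP_opt_def in_P_iff)
  have "d + q = LP_obj (Suc 0) 2 2 lam p (\<lambda>v s t. 1)"
    using d_le_1 by (simp add: LP_obj_eq)
  also have "\<dots> \<le> LP_obj (Suc 0) 2 2 lam p x"
    using assms ones_in_P by (simp add: is_LP_opt_def)
  also have "\<dots> \<le> d * x 0 0 1 + q * x 0 1 2"
    unfolding LP_obj_eq using q_pos by (intro add_mono mult_left_mono) (auto simp: mult.commute)
  finally show ?thesis
    using le_weighted_sum_imp_eq_one[OF d_pos q_pos] single_feasible_bounds[OF feasible] by blast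
qed

lemma SQ_output_notifies_always:
  assumes "is_SQ_output (Suc 0) 2 2 lam p g x"
  shows "x 0 0 1 = 1 \<and> x 0 1 2 = 1"
proof -
  have feasible: "single_feasible 2 2 lam g (x 0)"
    using assms by (simp add: is_SQ_output_def)
  have "d + q = SQ_obj 2 2 lam p x 0 (\<lambda>s t. 1)"
    by (simp add: SQ_obj_eq)
  also have "\<dots> \<le> SQ_obj 2 2 lam p x 0 (x 0)"
    using assms ones_feasible unfolding is_SQ_output_def by blast
  also have "\<dots> = d * x 0 0 1 + q * x 0 1 2"
    by (simp add: SQ_obj_eq)
  finally show ?thesis
    using le_weighted_sum_imp_eq_one[OF d_pos q_pos] single_feasible_bounds[OF feasible] by blast
qed

lemma AA_output_notifies_always:
  assumes "is_AA_output (Suc 0) 2 2 lam p g x"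
  shows "x 0 0 1 = 1 \<and> x 0 1 2 = 1"
proof -
  obtain m xs ys where m: "1 \<le> m" and start: "xs 0 = (\<lambda>v s t. 0)" and x: "x = xs m"
    and steps: "\<forall>i\<in>{1..m}.
             in_P (Suc 0) 2 2 lam g (ys i) \<and>
             (\<forall>y. in_P (Suc 0) 2 2 lam g y \<longrightarrow>
                inner_sol (Suc 0) 2 2 y (grad_f (Suc 0) lam p (xs (i - 1)))
                  \<le> inner_sol (Suc 0) 2 2 (ys i) (grad_f (Suc 0) lam p (xs (i - 1)))) \<and>
             xs i = (\<lambda>v s t. xs (i - 1) v s t + ys i v s t / real m)"
    using assms unfolding is_AA_output_def by blast
  have direction: "ys i 0 0 1 = 1 \<and> ys i 0 1 2 = 1" if "i \<in> {1..m}" for i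
  proof -
    have feasible: "single_feasible 2 2 lam g (ys i 0)"
      using steps that by (simp add: in_P_iff)
    have "inner_sol (Suc 0) 2 2 (\<lambda>v s t. 1) (grad_f (Suc 0) lam p (xs (i - 1)))
            \<le> inner_sol (Suc 0) 2 2 (ys i) (grad_f (Suc 0) lam p (xs (i - 1)))"
      using steps that ones_in_P by blast
    then have "d + q \<le> d * ys i 0 0 1 + q * ys i 0 1 2"
      by (simp add: inner_grad_f_eq)
    then show ?thesis
      using le_weighted_sum_imp_eq_one[OF d_pos q_pos] single_feasible_bounds[OF feasible] by blast
  qed
  have "i \<le> m \<Longrightarrow> xs i 0 0 1 = i / m \<and> xs i 0 1 2 = i / m" for i
  proof (induction i)
    case (Suc i)
    then have "xs (Suc i) = (\<lambda>v s t. xs i v s t + ys (Suc i) v s t / real m)"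
      using steps by auto
    then show ?case
      using Suc direction[of "Suc i"] by (simp add: add_divide_distrib)
  qed (simp add: start)
  then show ?thesis
    using m x by simp
qed

lemma ex_ante_notifies_always:
  assumes "is_ex_ante (Suc 0) 2 2 lam p g x"
  shows "x 0 0 1 = 1 \<and> x 0 1 2 = 1"
  using assms LP_opt_notifies_always AA_output_notifies_always SQ_output_notifies_always
  unfolding is_ex_ante_def by blast

lemma ones_is_ex_ante: "is_ex_ante (Suc 0) 2 2 lam p g (\<lambda>v s t. 1)"
proof -
  have LP: "is_LP_opt (Suc 0) 2 2 lam p g (\<lambda>v s t. 1)"
    using ones_in_P LP_obj_le d_le_1 by (simp add: is_LP_opt_def LP_obj_eq)
  have best_direction: "inner_sol (Suc 0) 2 2 y (grad_f (Suc 0) lam p z)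
                          \<le> inner_sol (Suc 0) 2 2 (\<lambda>v s t. 1) (grad_f (Suc 0) lam p z)"
    if "in_P (Suc 0) 2 2 lam g y" for y z
    using that single_feasible_bounds[of "y 0"] d_pos q_pos
    by (auto simp: in_P_iff inner_grad_f_eq intro!: add_mono mult_left_le)
  have AA: "is_AA_output (Suc 0) 2 2 lam p g (\<lambda>v s t. 1)"
    unfolding is_AA_output_def
    by (rule exI[of _ 1], rule conjI, simp,
        rule exI[of _ "\<lambda>i. if i = 0 then (\<lambda>v s t. 0) else (\<lambda>v s t. 1)"],
        rule exI[of _ "\<lambda>i v s t. 1"])
      (simp add: ones_in_P best_direction)
  have SQ: "is_SQ_output (Suc 0) 2 2 lam p g (\<lambda>v s t. 1)"
    using ones_feasible single_feasible_bounds d_pos q_pos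
    by (auto simp: is_SQ_output_def SQ_obj_eq intro!: add_mono mult_left_le)
  show ?thesis
    using LP AA SQ unfolding is_ex_ante_def by blast
qed

lemma arrival_period_1: "arrival_pmf 2 lam (Suc 0) = return_pmf (Some 0)"
proof (rule pmf_eqI)
  fix a
  show "pmf (arrival_pmf 2 lam (Suc 0)) a = pmf (return_pmf (Some 0)) a"
    by (subst pmf_arrival_pmf)
      (auto simp: hard_arrivals_def numeral_2_eq_2 indicator_def split: option.split)
qed

lemma state_after_period_1:
  assumes "x 0 0 1 = 1"
  shows "state_dist (Suc 0) 2 lam p g x (Suc 0) = map_pmf (\<lambda>z. (\<lambda>v. 0)(0 := 1 + z)) g"
proof -
  have "state_dist (Suc 0) 2 lam p g x (Suc 0) =
          map_pmf snd (step_pmf (Suc 0) 2 lam p g x 1 (\<lambda>v. 0))"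
    by (simp add: bind_return_pmf)
  also have "\<dots> = map_pmf (\<lambda>z. (\<lambda>v. 0)(0 := 1 + z)) (map_pmf snd (pair_pmf (bernoulli_pmf d) g))"
    using assms
    by (simp add: step_pmf_single_volunteer arrival_period_1 bind_return_pmf bernoulli_pmf_1
        pair_return_pmf1 map_pmf_comp case_prod_beta hard_match_def)
  finally show ?thesis
    by (simp add: map_snd_pair_pmf)
qed

lemma prob_completion:
  "measure_pmf.prob (step_pmf (Suc 0) 2 lam p g x t r) {c. fst c} =
     (if r 0 \<le> t
      then \<Sum>s<2. lam s t * pmf (bernoulli_pmf (x 0 s t)) True * pmf (bernoulli_pmf (p 0 s)) True
      else 0)"
  using q_pos q_le_1
  by (intro prob_completion_single_volunteer) (auto simp: hard_arrivals_def numeral_2_eq_2)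

lemma prob_completion_period_2:
  assumes "x 0 1 2 = 1"
  shows "measure_pmf.prob (step_pmf (Suc 0) 2 lam p g x 2 r) {c. fst c} =
           (if r 0 \<le> 2 then q else 0)"
  using assms q_pos q_le_1
  by (simp add: prob_completion) (simp add: hard_arrivals_def hard_match_def numeral_2_eq_2)

lemma policy_reward_eq:
  assumes "x 0 0 1 = 1" "x 0 1 2 = 1"
  shows "policy_reward (Suc 0) 2 2 lam p g x = d + q * q"
proof -
  let ?completed = "\<lambda>t. measure_pmf.prob
    (bind_pmf (state_dist (Suc 0) 2 lam p g x (t - 1)) (step_pmf (Suc 0) 2 lam p g x t))
    {c. fst c}"
  have period_1: "?completed 1 = d"
    using assms d_pos d_le_1
    by (simp add: bind_return_pmf prob_completion)
      (simp add: hard_arrivals_def hard_match_def numeral_2_eq_2)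
  have "?completed 2 = (\<integral>z. (if z \<le> 1 then q else 0) \<partial>measure_pmf g)"
    using assms q_pos q_le_1
    by (simp add: state_after_period_1 measure_pmf_prob_bind prob_completion_period_2
        del: state_dist.simps)
  also have "\<dots> = (\<Sum>z\<in>{1}. (if z \<le> 1 then q else 0) * pmf g z)"
    using q_pos q_le_1
    by (intro integral_measure_pmf_real)
      (auto simp: set_pmf_iff pmf_one_or_two_pmf split: if_splits)
  also have "\<dots> = q * q"
    using q_pos q_le_1 by (simp add: pmf_one_or_two_pmf)
  finally have period_2: "?completed 2 = q * q" .
  show ?thesis
    unfolding policy_reward_def using period_1 period_2 by (simp add: numeral_2_eq_2)
qed

end

lemma exists_weight_below_ratio:
  fixes q c :: real
  assumes "0 < q" "q < c"
  shows "\<exists>d. 0 < d \<and> d \<le> 1 \<and> d + q * q < c * (d + q)"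
proof -
  define d where "d = min 1 (q * (c - q) / 2)"
  have gap: "0 < q * (c - q)"
    using assms by simp
  then have d: "0 < d" "d \<le> 1" "d \<le> q * (c - q) / 2"
    unfolding d_def by auto
  have "d * (1 - c) < q * (c - q)"
  proof (cases "c \<le> 1")
    case True
    then have "d * (1 - c) \<le> d"
      using d assms by (simp add: mult_left_le)
    then show ?thesis
      using d gap by linarith
  next
    case False
    then have "d * (1 - c) \<le> 0"
      using d by (simp add: mult_nonneg_nonpos)
    then show ?thesis
      using gap by linarith
  qed
  then show ?thesis
    using d by (intro exI[of _ d]) (auto simp: algebra_simps)
qed

theorem proposition3:
  fixes q c :: real
  assumes "0 < q" and "q \<le> 1" and "q < c"
  shows "\<exists>V S T lam p g.
           valid_instance V S T lam p g \<and> has_mdhr g q \<and>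
           (\<exists>x. is_ex_ante V S T lam p g x) \<and>
           (\<forall>x. is_ex_ante V S T lam p g x \<longrightarrow>
                policy_reward V S T lam p g x < c * LP_value V S T lam p g)"
proof -
  obtain d where "0 < d" "d \<le> 1" and ratio: "d + q * q < c * (d + q)"
    using exists_weight_below_ratio assms by blast
  then interpret hard_instance q d
    using assms by unfold_locales
  show ?thesis
  proof (intro exI conjI allI impI)
    show "valid_instance (Suc 0) 2 2 lam p g"
      by (fact valid)
    show "has_mdhr g q"
      using assms by (simp add: has_mdhr_one_or_two_pmf)
    show "is_ex_ante (Suc 0) 2 2 lam p g (\<lambda>v s t. 1)"
      by (fact ones_is_ex_ante)
  next
    fix x
    assume "is_ex_ante (Suc 0) 2 2 lam p g x"
    then have "x 0 0 1 = 1 \<and> x 0 1 2 = 1"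
      by (rule ex_ante_notifies_always)
    then have "policy_reward (Suc 0) 2 2 lam p g x = d + q * q"
      using policy_reward_eq by blast
    then show "policy_reward (Suc 0) 2 2 lam p g x < c * LP_value (Suc 0) 2 2 lam p g"
      using ratio by (simp add: LP_value_eq)
  qed
qed

end
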